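(* Let $\beta\in(0,\infty)$ and, for each $N\ge 1$, let $K=K_N$ be a positive integer with $K_N/N\to\beta$ as $N\to\infty$. Let $\boldsymbol{S}\in\mathbb{R}^{N\times K}$ be a random time-hopping matrix with $N_{\mathsf s}=1$, i.e. its columns $\boldsymbol{s}_1,\dots,\boldsymbol{s}_K$ are independent, and $\boldsymbol{s}_k=\epsilon_k\boldsymbol{e}_{\pi_k}$ where $\pi_k$ is uniform on $\{1,\dots,N\}$, $\epsilon_k$ is uniform on $\{-1,+1\}$, and all $\pi_k,\epsilon_k$ are independent. For an integer $L\ge 1$ let \[ m_L:=\frac{1}{N}\operatorname{Tr}\big(\boldsymbol{S}\boldsymbol{S}^{\mathsf T}\big)^L. \] Then, as $N\to\infty$, $m_L$ converges in probability to \[ \bar m_L:=\sum_{\ell=1}^{L}\left\{ {L \atop \ell}\right\}\beta^{\ell}, \] the $L$th moment of a Poisson distribution with mean $\beta$, where $\left\{ {L \atop \ell}\right\}$ denotes the Stirling number of the second kind.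
   Context: $\boldsymbol{e}_i$ denotes the $i$th standard basis vector of $\mathbb{R}^N$. The limit regime $N\to\infty$, $K\to\infty$, $K/N\to\beta$ is called the large-system limit. *)

theory Defs
  imports "HOL-Probability.Probability" "HOL-Combinatorics.Stirling" "Jordan_Normal_Form.Matrix"
begin

text \<open>Random time-hopping matrix with N_s = 1. An outcome is a function
  x :: nat => nat * real on the column indices k < K, where fst (x k) = pi_k in {0..<N}
  (0-based row index) and snd (x k) = epsilon_k in {-1,1}.\<close>

definition th_pmf :: "nat \<Rightarrow> nat \<Rightarrow> (nat \<Rightarrow> nat \<times> real) pmf" where
  "th_pmf N K = Pi_pmf {..<K} (0, 0)
      (\<lambda>_. pair_pmf (pmf_of_set {..<N}) (pmf_of_set {-1, 1}))"

definition th_matrix :: "nat \<Rightarrow> nat \<Rightarrow> (nat \<Rightarrow> nat \<times> real) \<Rightarrow> real mat" where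
  "th_matrix N K x = mat N K (\<lambda>(i, k). if i = fst (x k) then snd (x k) else 0)"

definition moment_L :: "nat \<Rightarrow> nat \<Rightarrow> nat \<Rightarrow> (nat \<Rightarrow> nat \<times> real) \<Rightarrow> real" where
  "moment_L L N K x =
     (let G = (th_matrix N K x * transpose_mat (th_matrix N K x)) ^\<^sub>m L
      in (\<Sum>i<N. G $$ (i, i))) / real N"

definition poisson_moment :: "nat \<Rightarrow> real \<Rightarrow> real" where
  "poisson_moment L \<beta> = (\<Sum>l = 1..L. real (Stirling L l) * \<beta> ^ l)"

end

theory Submission
  imports Defs
begin

text \<open>Every column of \<open>S\<close> has a single entry \<open>\<plusminus>1\<close>, so \<open>S S\<^sup>T\<close> is diagonal with entries
  \<open>d\<^sub>i = #{k. \<pi>\<^sub>k = i}\<close> and \<open>m\<^sub>L = (1/N) \<Sum>\<^sub>i d\<^sub>i\<^sup>L\<close>. Expanding \<open>d\<^sub>i\<^sup>L\<close> as a sum over maps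
  \<open>f : [L] \<rightarrow> [K]\<close> of the indicator that all columns in the image of \<open>f\<close> hop to row \<open>i\<close>,
  and grouping the maps by the size \<open>l\<close> of their image, gives the binomial moment
  \<open>E d\<^sub>i\<^sup>L = \<Sum>\<^sub>l S(L,l) K(K-1)\<dots>(K-l+1) N\<^sup>-\<^sup>l\<close>, which tends to \<open>\<Sum>\<^sub>l S(L,l) \<beta>\<^sup>l\<close>.
  For \<open>i \<noteq> j\<close> no column can hop to both rows, so \<open>E (d\<^sub>i\<^sup>L d\<^sub>j\<^sup>L) \<le> (E d\<^sub>i\<^sup>L)\<^sup>2\<close>; hence
  \<open>E m\<^sub>L\<^sup>2 \<le> E d\<^sup>2\<^sup>L / N + (E m\<^sub>L)\<^sup>2\<close>, and Chebyshev's inequality gives convergence in probability.\<close>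

lemma tendsto_prob_deviation_zero_by_moments:
  fixes M :: "nat \<Rightarrow> 'a pmf" and X :: "nat \<Rightarrow> 'a \<Rightarrow> real"
  assumes integrable: "\<forall>\<^sub>F N in sequentially. integrable (M N) (\<lambda>x. (X N x)\<^sup>2)"
    and mean: "(\<lambda>N. measure_pmf.expectation (M N) (X N)) \<longlonglongrightarrow> a"
    and second_moment: "\<forall>\<^sub>F N in sequentially. measure_pmf.expectation (M N) (\<lambda>x. (X N x)\<^sup>2) \<le> b N"
    and b: "b \<longlonglongrightarrow> a\<^sup>2"
    and "\<epsilon> > 0"
  shows "(\<lambda>N. measure_pmf.prob (M N) {x. \<bar>X N x - a\<bar> > \<epsilon>}) \<longlonglongrightarrow> 0"
proof (rule tendsto_sandwich[where f = "\<lambda>_. 0"])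
  let ?E = "\<lambda>N. measure_pmf.expectation (M N) (X N)"
  show "\<forall>\<^sub>F N in sequentially. measure_pmf.prob (M N) {x. \<bar>X N x - a\<bar> > \<epsilon>}
      \<le> (b N - 2 * a * ?E N + a\<^sup>2) / \<epsilon>\<^sup>2"
    using integrable second_moment
  proof eventually_elim
    case (elim N)
    have X: "integrable (M N) (X N)"
      by (rule measure_pmf.square_integrable_imp_integrable[OF _ elim(1)]) simp
    have deviation_squared: "integrable (M N) (\<lambda>x. (X N x - a)\<^sup>2)"
      using elim(1) X by (simp add: power2_diff)
    have "measure_pmf.prob (M N) {x. \<bar>X N x - a\<bar> > \<epsilon>} \<le> measure_pmf.prob (M N) {x. \<bar>X N x - a\<bar> \<ge> \<epsilon>}"
      by (intro measure_pmf.finite_measure_mono) auto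
    also have "\<dots> \<le> measure_pmf.expectation (M N) (\<lambda>x. (X N x - a)\<^sup>2) / \<epsilon>\<^sup>2"
      using measure_pmf.second_moment_method[OF _ deviation_squared \<open>\<epsilon> > 0\<close>] by simp
    also have "measure_pmf.expectation (M N) (\<lambda>x. (X N x - a)\<^sup>2) =
        measure_pmf.expectation (M N) (\<lambda>x. (X N x)\<^sup>2) - 2 * a * ?E N + a\<^sup>2"
      using elim(1) X by (simp add: power2_diff)
    also have "\<dots> / \<epsilon>\<^sup>2 \<le> (b N - 2 * a * ?E N + a\<^sup>2) / \<epsilon>\<^sup>2"
      using elim(2) by (intro divide_right_mono) auto
    finally show ?case .
  qed
  have "(\<lambda>N. (b N - 2 * a * ?E N + a\<^sup>2) / \<epsilon>\<^sup>2) \<longlonglongrightarrow> (a\<^sup>2 - 2 * a * a + a\<^sup>2) / \<epsilon>\<^sup>2"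
    by (intro tendsto_divide tendsto_add tendsto_diff tendsto_mult b mean tendsto_const) (use \<open>\<epsilon> > 0\<close> in simp)
  then show "(\<lambda>N. (b N - 2 * a * ?E N + a\<^sup>2) / \<epsilon>\<^sup>2) \<longlonglongrightarrow> 0"
    by (simp add: power2_eq_square)
qed simp_all

lemma sum_card_insert:
  fixes w :: "nat \<Rightarrow> 'a::comm_ring_1"
  assumes "S \<subseteq> {..<K}"
  shows "(\<Sum>y<K. w (card (insert y S))) =
    of_nat (card S) * w (card S) + (of_nat K - of_nat (card S)) * w (Suc (card S))"
proof -
  have fin: "finite S" using assms finite_subset by blast
  have le: "card S \<le> K" using assms by (metis card_lessThan card_mono finite_lessThan)
  have "(\<Sum>y<K. w (card (insert y S))) =
      (\<Sum>y\<in>{..<K} - S. w (card (insert y S))) + (\<Sum>y\<in>S. w (card (insert y S)))"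
    using assms by (intro sum.subset_diff) auto
  also have "\<dots> = of_nat (K - card S) * w (Suc (card S)) + of_nat (card S) * w (card S)"
    using assms fin by (simp add: card_Diff_subset insert_absorb)
  finally show ?thesis using le by (simp add: of_nat_diff algebra_simps)
qed

lemma sum_PiE_card_image_Suc:
  fixes w :: "nat \<Rightarrow> 'a::comm_ring_1"
  shows "(\<Sum>f\<in>{..<Suc L} \<rightarrow>\<^sub>E {..<K}. w (card (f ` {..<Suc L}))) =
    (\<Sum>f\<in>{..<L} \<rightarrow>\<^sub>E {..<K}. (\<lambda>l. of_nat l * w l + (of_nat K - of_nat l) * w (Suc l)) (card (f ` {..<L})))"
proof -
  have "{..<L} \<inter> {j. j \<noteq> L} = {..<L}" by auto
  then have "(\<Sum>f\<in>{..<Suc L} \<rightarrow>\<^sub>E {..<K}. w (card (f ` {..<Suc L}))) =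
      (\<Sum>(y, g)\<in>{..<K} \<times> ({..<L} \<rightarrow>\<^sub>E {..<K}). w (card (insert y (g ` {..<L}))))"
    by (intro sum.reindex_bij_witness[of _ "\<lambda>(y, g). g(L := y)" "\<lambda>g. (g L, g(L := undefined))"])
       (auto simp: PiE_def extensional_def lessThan_Suc)
  also have "\<dots> = (\<Sum>g\<in>{..<L} \<rightarrow>\<^sub>E {..<K}. \<Sum>y<K. w (card (insert y (g ` {..<L}))))"
    by (subst sum.cartesian_product[symmetric]) (subst sum.swap, simp)
  also have "\<dots> = (\<Sum>f\<in>{..<L} \<rightarrow>\<^sub>E {..<K}.
      (\<lambda>l. of_nat l * w l + (of_nat K - of_nat l) * w (Suc l)) (card (f ` {..<L})))"
    by (intro sum.cong refl sum_card_insert) (auto simp: PiE_def)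
  finally show ?thesis .
qed

text \<open>Grouping the maps \<open>{..<L} \<rightarrow> {..<K}\<close> by the size \<open>l\<close> of their image: there are
  \<open>Stirling L l\<close> ways to partition the domain and \<open>K (K - 1) \<dots> (K - l + 1)\<close> injective
  labellings of the blocks.\<close>
lemma sum_PiE_card_image:
  fixes w :: "nat \<Rightarrow> 'a::comm_ring_1"
  shows "(\<Sum>f\<in>{..<L} \<rightarrow>\<^sub>E {..<K}. w (card (f ` {..<L}))) =
    (\<Sum>l\<le>L. of_nat (Stirling L l) * (\<Prod>j<l. of_nat K - of_nat j) * w l)"
proof (induction L arbitrary: w)
  case 0
  then show ?case by simp
next
  case (Suc L)
  define falling :: "nat \<Rightarrow> 'a" where "falling l = (\<Prod>j<l. of_nat K - of_nat j)" for l
  define g where "g l = of_nat l * of_nat (Stirling L l) * falling l * w l" for l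
  have "(\<Sum>f\<in>{..<Suc L} \<rightarrow>\<^sub>E {..<K}. w (card (f ` {..<Suc L}))) =
      (\<Sum>l\<le>L. of_nat (Stirling L l) * falling l * (of_nat l * w l + (of_nat K - of_nat l) * w (Suc l)))"
    using sum_PiE_card_image_Suc[of w L K]
      Suc.IH[of "\<lambda>l. of_nat l * w l + (of_nat K - of_nat l) * w (Suc l)"]
    by (simp add: falling_def)
  also have "\<dots> = (\<Sum>l\<le>L. g l) + (\<Sum>l\<le>L. of_nat (Stirling L l) * falling (Suc l) * w (Suc l))"
    by (simp add: g_def falling_def sum.distrib[symmetric] algebra_simps)
  also have "(\<Sum>l\<le>L. g l) = (\<Sum>l\<le>L. g (Suc l))"
    using sum.atMost_Suc_shift[of g L] by (simp add: g_def)
  also have "(\<Sum>l\<le>L. g (Suc l)) + (\<Sum>l\<le>L. of_nat (Stirling L l) * falling (Suc l) * w (Suc l))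
      = (\<Sum>l\<le>L. of_nat (Stirling (Suc L) (Suc l)) * falling (Suc l) * w (Suc l))"
    by (simp add: g_def sum.distrib[symmetric] algebra_simps)
  also have "\<dots> = (\<Sum>l\<le>Suc L. of_nat (Stirling (Suc L) l) * falling l * w l)"
    by (subst sum.atMost_Suc_shift) simp
  finally show ?case by (simp add: falling_def)
qed

definition binomial_moment :: "nat \<Rightarrow> nat \<Rightarrow> real \<Rightarrow> real" where
  "binomial_moment L K p = (\<Sum>l\<le>L. real (Stirling L l) * (\<Prod>j<l. real K - real j) * p ^ l)"

lemma binomial_moment_tendsto:
  assumes "(\<lambda>N. real (K N) / real N) \<longlonglongrightarrow> \<beta>"
  shows "(\<lambda>N. binomial_moment L (K N) (1 / real N)) \<longlonglongrightarrow> (\<Sum>l\<le>L. real (Stirling L l) * \<beta> ^ l)"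
proof -
  have "(\<lambda>N. (real (K N) - real j) * (1 / real N)) \<longlonglongrightarrow> \<beta>" for j
    using tendsto_diff[OF assms lim_const_over_n[of "real j"]] by (simp add: diff_divide_distrib)
  then have "(\<lambda>N. \<Prod>j<l. (real (K N) - real j) * (1 / real N)) \<longlonglongrightarrow> \<beta> ^ l" for l
    using tendsto_prod[of "{..<l}"] by fastforce
  moreover have "(\<Prod>j<l. (real (K N) - real j) * (1 / real N)) = (\<Prod>j<l. real (K N) - real j) * (1 / real N) ^ l"
    for N l by (subst prod.distrib) simp
  ultimately show ?thesis
    unfolding binomial_moment_def mult.assoc by (auto intro!: tendsto_sum tendsto_mult)
qed

lemma pow_mat_mat_diag: "mat_diag n f ^\<^sub>m L = mat_diag n (\<lambda>i. f i ^ L)"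
proof (induction L)
  case 0
  then show ?case by (simp add: mat_diag_def)
next
  case (Suc L)
  then show ?case by (simp add: power_commutes)
qed

definition row_hits :: "nat \<Rightarrow> nat \<Rightarrow> (nat \<Rightarrow> nat \<times> real) \<Rightarrow> real" where
  "row_hits K i x = (\<Sum>k<K. if fst (x k) = i then 1 else 0)"

definition hits_moment :: "nat \<Rightarrow> nat \<Rightarrow> nat \<Rightarrow> (nat \<Rightarrow> nat \<times> real) \<Rightarrow> real" where
  "hits_moment L N K x = (\<Sum>i<N. row_hits K i x ^ L) / real N"

lemma th_matrix_mult_transpose:
  assumes "\<And>k. k < K \<Longrightarrow> (snd (x k))\<^sup>2 = 1"
  shows "th_matrix N K x * transpose_mat (th_matrix N K x) = mat_diag N (\<lambda>i. row_hits K i x)"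
proof (rule eq_matI)
  fix i j assume "i < dim_row (mat_diag N (\<lambda>i. row_hits K i x))" "j < dim_col (mat_diag N (\<lambda>i. row_hits K i x))"
  then have ij: "i < N" "j < N" by (auto simp: mat_diag_def)
  have "(th_matrix N K x * transpose_mat (th_matrix N K x)) $$ (i, j) =
     (\<Sum>k<K. (if i = fst (x k) then snd (x k) else 0) * (if j = fst (x k) then snd (x k) else 0))"
    using ij by (simp add: th_matrix_def scalar_prod_def lessThan_atLeast0)
  also have "\<dots> = (if i = j then row_hits K i x else 0)"
    unfolding row_hits_def using assms by (cases "i = j") (auto simp: power2_eq_square intro!: sum.cong sum.neutral)
  finally show "(th_matrix N K x * transpose_mat (th_matrix N K x)) $$ (i, j) =
      mat_diag N (\<lambda>i. row_hits K i x) $$ (i, j)"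
    using ij by (simp add: mat_diag_def)
qed (auto simp: mat_diag_def th_matrix_def)

lemma moment_L_eq_hits_moment:
  assumes "\<And>k. k < K \<Longrightarrow> (snd (x k))\<^sup>2 = 1"
  shows "moment_L L N K x = hits_moment L N K x"
proof -
  have "(th_matrix N K x * transpose_mat (th_matrix N K x)) ^\<^sub>m L = mat_diag N (\<lambda>i. row_hits K i x ^ L)"
    by (simp add: th_matrix_mult_transpose[OF assms] pow_mat_mat_diag)
  then show ?thesis by (simp add: moment_L_def hits_moment_def mat_diag_def)
qed

lemma set_pmf_th_pmf:
  assumes "N > 0"
  shows "set_pmf (th_pmf N K) = PiE_dflt {..<K} (0, 0) (\<lambda>_. {..<N} \<times> {-1, 1})"
proof -
  have "set_pmf (pmf_of_set {..<N}) = {..<N}"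
    using assms by (intro set_pmf_of_set) auto
  then show ?thesis
    unfolding th_pmf_def by (subst set_Pi_pmf) (auto simp: o_def)
qed

lemma finite_set_pmf_th_pmf: "N > 0 \<Longrightarrow> finite (set_pmf (th_pmf N K))"
  by (simp add: set_pmf_th_pmf finite_PiE_dflt)

lemma integrable_th_pmf: "N > 0 \<Longrightarrow> integrable (measure_pmf (th_pmf N K)) (f :: _ \<Rightarrow> real)"
  by (intro integrable_measure_pmf_finite finite_set_pmf_th_pmf)

lemma th_pmf_sign_squared:
  "N > 0 \<Longrightarrow> x \<in> set_pmf (th_pmf N K) \<Longrightarrow> k < K \<Longrightarrow> (snd (x k))\<^sup>2 = 1"
  by (auto simp: set_pmf_th_pmf PiE_dflt_def)

lemma prob_th_pmf_moment_L_eq: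
  assumes "N > 0"
  shows "measure_pmf.prob (th_pmf N K) {x. P (moment_L L N K x)} =
    measure_pmf.prob (th_pmf N K) {x. P (hits_moment L N K x)}"
proof -
  have "{x. P (moment_L L N K x)} \<inter> set_pmf (th_pmf N K) = {x. P (hits_moment L N K x)} \<inter> set_pmf (th_pmf N K)"
    using assms by (auto simp: moment_L_eq_hits_moment th_pmf_sign_squared)
  then show ?thesis by (metis measure_Int_set_pmf)
qed

lemma prob_th_pmf_hop_pattern:
  assumes "F \<subseteq> {..<K}" and "\<And>k. k \<in> F \<Longrightarrow> c k < N"
  shows "measure_pmf.prob (th_pmf N K) {x. \<forall>k\<in>F. fst (x k) = c k} = (1 / real N) ^ card F"
proof -
  let ?E = "\<lambda>k. if k \<in> F then fst -` {c k} else UNIV"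
  have pattern_Pi: "{x. \<forall>k\<in>F. fst (x k) = c k} = Pi {..<K} ?E"
    using assms(1) by (auto simp: Pi_def)
  have "measure_pmf.prob (th_pmf N K) {x. \<forall>k\<in>F. fst (x k) = c k} =
      (\<Prod>k<K. measure_pmf.prob (pair_pmf (pmf_of_set {..<N}) (pmf_of_set {-1, 1::real})) (?E k))"
    unfolding th_pmf_def pattern_Pi by (subst measure_Pi_pmf_Pi) auto
  also have "\<dots> = (\<Prod>k<K. if k \<in> F then 1 / real N else 1)"
  proof (intro prod.cong refl)
    fix k
    have "measure_pmf.prob (pmf_of_set {..<N}) {c k} = 1 / real N" if "k \<in> F"
      using assms(2)[OF that] by (subst measure_pmf_of_set) auto
    then show "measure_pmf.prob (pair_pmf (pmf_of_set {..<N}) (pmf_of_set {-1, 1::real})) (?E k) =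
        (if k \<in> F then 1 / real N else 1)"
      by (simp add: measure_map_pmf[symmetric] map_fst_pair_pmf)
  qed
  also have "\<dots> = (1 / real N) ^ card F"
    using assms(1) by (simp add: prod.inter_restrict[symmetric] Int_absorb1)
  finally show ?thesis .
qed

text \<open>Overlapping hop patterns to distinct rows are incompatible; disjoint ones are independent.\<close>
lemma prob_th_pmf_two_rows_le:
  assumes "i \<noteq> i'" "i < N" "i' < N" "F \<subseteq> {..<K}" "G \<subseteq> {..<K}"
  shows "measure_pmf.prob (th_pmf N K) ({x. \<forall>k\<in>F. fst (x k) = i} \<inter> {x. \<forall>k\<in>G. fst (x k) = i'})
    \<le> (1 / real N) ^ card F * (1 / real N) ^ card G"
proof (cases "F \<inter> G = {}")
  case True
  have disjoint_rows: "{x. \<forall>k\<in>F. fst (x k) = i} \<inter> {x. \<forall>k\<in>G. fst (x k) = i'} =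
      {x. \<forall>k\<in>F \<union> G. fst (x k) = (if k \<in> F then i else i')}"
    using True by auto
  have "measure_pmf.prob (th_pmf N K) ({x. \<forall>k\<in>F. fst (x k) = i} \<inter> {x. \<forall>k\<in>G. fst (x k) = i'})
      = (1 / real N) ^ card (F \<union> G)"
    unfolding disjoint_rows by (rule prob_th_pmf_hop_pattern) (use assms in auto)
  also have "card (F \<union> G) = card F + card G"
    using True assms(4,5) by (intro card_Un_disjoint) (auto intro: finite_subset)
  finally show ?thesis by (simp add: power_add)
next
  case False
  then have no_outcome: "{x. \<forall>k\<in>F. fst (x k) = i} \<inter> {x. \<forall>k\<in>G. fst (x k) = i'} = {}"
    using assms(1) by auto
  show ?thesis unfolding no_outcome by simp
qed

lemma row_hits_power_eq_sum_indicator: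
  "row_hits K i x ^ L = (\<Sum>f\<in>{..<L} \<rightarrow>\<^sub>E {..<K}. indicator {x. \<forall>k\<in>f ` {..<L}. fst (x k) = i} x)"
proof -
  have "row_hits K i x ^ L = (\<Prod>j<L. \<Sum>k<K. (\<lambda>j k. if fst (x k) = i then 1 else 0) j k)"
    by (simp add: row_hits_def)
  also have "\<dots> = (\<Sum>f\<in>{..<L} \<rightarrow>\<^sub>E {..<K}. \<Prod>j<L. if fst (x (f j)) = i then 1 else 0)"
    by (subst prod_sum_PiE) auto
  also have "\<dots> = (\<Sum>f\<in>{..<L} \<rightarrow>\<^sub>E {..<K}. indicator {x. \<forall>k\<in>f ` {..<L}. fst (x k) = i} x)"
    by (intro sum.cong refl) (auto simp: indicator_def)
  finally show ?thesis .
qed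

lemma expectation_row_hits_power:
  assumes "i < N"
  shows "measure_pmf.expectation (th_pmf N K) (\<lambda>x. row_hits K i x ^ L) = binomial_moment L K (1 / real N)"
proof -
  have "measure_pmf.expectation (th_pmf N K) (\<lambda>x. row_hits K i x ^ L) =
      (\<Sum>f\<in>{..<L} \<rightarrow>\<^sub>E {..<K}. measure_pmf.prob (th_pmf N K) {x. \<forall>k\<in>f ` {..<L}. fst (x k) = i})"
    using assms by (simp add: row_hits_power_eq_sum_indicator Bochner_Integration.integral_sum integrable_th_pmf)
  also have "\<dots> = (\<Sum>f\<in>{..<L} \<rightarrow>\<^sub>E {..<K}. (1 / real N) ^ card (f ` {..<L}))"
    using assms by (intro sum.cong refl prob_th_pmf_hop_pattern) auto
  also have "\<dots> = binomial_moment L K (1 / real N)"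
    by (simp add: sum_PiE_card_image binomial_moment_def)
  finally show ?thesis .
qed

lemma expectation_row_hits_power_mult_le:
  assumes "i \<noteq> i'" "i < N" "i' < N"
  shows "measure_pmf.expectation (th_pmf N K) (\<lambda>x. row_hits K i x ^ L * row_hits K i' x ^ L)
    \<le> (binomial_moment L K (1 / real N))\<^sup>2"
proof -
  let ?P = "{..<L} \<rightarrow>\<^sub>E {..<K}"
  let ?A = "\<lambda>f i. {x. \<forall>k\<in>f ` {..<L}. fst (x k) = i}"
  have "measure_pmf.expectation (th_pmf N K) (\<lambda>x. row_hits K i x ^ L * row_hits K i' x ^ L) =
      (\<Sum>f\<in>?P. \<Sum>g\<in>?P. measure_pmf.prob (th_pmf N K) (?A f i \<inter> ?A g i'))"
    using assms by (simp add: row_hits_power_eq_sum_indicator sum_product indicator_inter_arith[symmetric]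
        Bochner_Integration.integral_sum integrable_th_pmf)
  also have "\<dots> \<le> (\<Sum>f\<in>?P. \<Sum>g\<in>?P. (1 / real N) ^ card (f ` {..<L}) * (1 / real N) ^ card (g ` {..<L}))"
    using assms by (intro sum_mono prob_th_pmf_two_rows_le) auto
  also have "\<dots> = (binomial_moment L K (1 / real N))\<^sup>2"
    by (simp add: sum_product[symmetric] power2_eq_square sum_PiE_card_image binomial_moment_def)
  finally show ?thesis .
qed

lemma expectation_hits_moment:
  assumes "N > 0"
  shows "measure_pmf.expectation (th_pmf N K) (hits_moment L N K) = binomial_moment L K (1 / real N)"
  unfolding hits_moment_def using assms
  by (simp add: Bochner_Integration.integral_sum integrable_th_pmf expectation_row_hits_power)

lemma expectation_hits_moment_squared_le:
  assumes "N > 0"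
  shows "measure_pmf.expectation (th_pmf N K) (\<lambda>x. (hits_moment L N K x)\<^sup>2)
    \<le> binomial_moment (2 * L) K (1 / real N) / real N + (binomial_moment L K (1 / real N))\<^sup>2"
proof -
  let ?A = "binomial_moment (2 * L) K (1 / real N)" and ?B = "binomial_moment L K (1 / real N)"
  have row_pair: "measure_pmf.expectation (th_pmf N K) (\<lambda>x. row_hits K i x ^ L * row_hits K i' x ^ L)
      \<le> (if i = i' then ?A else 0) + ?B\<^sup>2" if "i < N" "i' < N" for i i'
  proof (cases "i = i'")
    case True
    then show ?thesis
      using that by (simp add: power_add[symmetric] mult_2 expectation_row_hits_power)
  qed (use that expectation_row_hits_power_mult_le in auto)
  have "measure_pmf.expectation (th_pmf N K) (\<lambda>x. (hits_moment L N K x)\<^sup>2) =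
      (\<Sum>i<N. \<Sum>i'<N. measure_pmf.expectation (th_pmf N K) (\<lambda>x. row_hits K i x ^ L * row_hits K i' x ^ L))
        / (real N)\<^sup>2"
    unfolding hits_moment_def using assms
    by (simp add: power_divide power2_eq_square sum_product Bochner_Integration.integral_sum integrable_th_pmf)
  also have "\<dots> \<le> (\<Sum>i<N. \<Sum>i'<N. (if i = i' then ?A else 0) + ?B\<^sup>2) / (real N)\<^sup>2"
    by (intro divide_right_mono sum_mono row_pair) auto
  also have "\<dots> = ?A / real N + ?B\<^sup>2"
    using assms by (simp add: sum.distrib field_simps power2_eq_square)
  finally show ?thesis .
qed

lemma tendsto_prob_hits_moment_deviation:
  fixes L :: nat and \<beta> :: real
  assumes K: "(\<lambda>N. real (K N) / real N) \<longlonglongrightarrow> \<beta>" and "\<epsilon> > 0"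
  defines "c \<equiv> \<Sum>l\<le>L. real (Stirling L l) * \<beta> ^ l"
  shows "(\<lambda>N. measure_pmf.prob (th_pmf N (K N)) {x. \<bar>hits_moment L N (K N) x - c\<bar> > \<epsilon>}) \<longlonglongrightarrow> 0"
proof -
  define \<mu> where "\<mu> L' N = binomial_moment L' (K N) (1 / real N)" for L' N
  have large_N: "\<forall>\<^sub>F N in sequentially. N > 0"
    by (rule eventually_gt_at_top)
  show ?thesis
  proof (rule tendsto_prob_deviation_zero_by_moments[where b = "\<lambda>N. \<mu> (2 * L) N * (1 / real N) + (\<mu> L N)\<^sup>2"])
    show "\<forall>\<^sub>F N in sequentially. integrable (th_pmf N (K N)) (\<lambda>x. (hits_moment L N (K N) x)\<^sup>2)"
      using large_N by eventually_elim (rule integrable_th_pmf)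
    show "(\<lambda>N. measure_pmf.expectation (th_pmf N (K N)) (hits_moment L N (K N))) \<longlonglongrightarrow> c"
    proof (rule Lim_transform_eventually)
      show "(\<lambda>N. \<mu> L N) \<longlonglongrightarrow> c"
        unfolding \<mu>_def c_def by (rule binomial_moment_tendsto[OF K])
      show "\<forall>\<^sub>F N in sequentially. \<mu> L N = measure_pmf.expectation (th_pmf N (K N)) (hits_moment L N (K N))"
        using large_N by eventually_elim (simp add: \<mu>_def expectation_hits_moment)
    qed
    show "\<forall>\<^sub>F N in sequentially. measure_pmf.expectation (th_pmf N (K N)) (\<lambda>x. (hits_moment L N (K N) x)\<^sup>2)
        \<le> \<mu> (2 * L) N * (1 / real N) + (\<mu> L N)\<^sup>2"
      using large_N by eventually_elim (simp add: \<mu>_def expectation_hits_moment_squared_le)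
    have "(\<lambda>N. \<mu> (2 * L) N * (1 / real N) + (\<mu> L N)\<^sup>2) \<longlonglongrightarrow>
        (\<Sum>l\<le>2 * L. real (Stirling (2 * L) l) * \<beta> ^ l) * 0 + c\<^sup>2"
      unfolding \<mu>_def c_def
      by (intro tendsto_add tendsto_mult tendsto_power binomial_moment_tendsto K lim_const_over_n)
    then show "(\<lambda>N. \<mu> (2 * L) N * (1 / real N) + (\<mu> L N)\<^sup>2) \<longlonglongrightarrow> c\<^sup>2"
      by simp
  qed (rule \<open>\<epsilon> > 0\<close>)
qed

theorem theorem1:
  fixes \<beta> :: real and K :: "nat \<Rightarrow> nat" and L :: nat
  assumes "\<beta> > 0"
    and "\<forall>N\<ge>1. K N \<ge> 1"
    and "(\<lambda>N. real (K N) / real N) \<longlonglongrightarrow> \<beta>"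
    and "L \<ge> 1"
  shows "\<forall>\<epsilon>>0. (\<lambda>N. measure_pmf.prob (th_pmf N (K N))
            {x. \<bar>moment_L L N (K N) x - poisson_moment L \<beta>\<bar> > \<epsilon>}) \<longlonglongrightarrow> 0"
proof (intro allI impI)
  fix \<epsilon> :: real assume "\<epsilon> > 0"
  have "{..L} = insert 0 {1..L}" by auto
  then have poisson_moment_eq: "poisson_moment L \<beta> = (\<Sum>l\<le>L. real (Stirling L l) * \<beta> ^ l)"
    using \<open>L \<ge> 1\<close> by (cases L) (auto simp: poisson_moment_def)
  show "(\<lambda>N. measure_pmf.prob (th_pmf N (K N))
      {x. \<bar>moment_L L N (K N) x - poisson_moment L \<beta>\<bar> > \<epsilon>}) \<longlonglongrightarrow> 0"
  proof (rule Lim_transform_eventually)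
    show "(\<lambda>N. measure_pmf.prob (th_pmf N (K N))
        {x. \<bar>hits_moment L N (K N) x - poisson_moment L \<beta>\<bar> > \<epsilon>}) \<longlonglongrightarrow> 0"
      unfolding poisson_moment_eq by (rule tendsto_prob_hits_moment_deviation[OF assms(3) \<open>\<epsilon> > 0\<close>])
    show "\<forall>\<^sub>F N in sequentially.
        measure_pmf.prob (th_pmf N (K N)) {x. \<bar>hits_moment L N (K N) x - poisson_moment L \<beta>\<bar> > \<epsilon>} =
        measure_pmf.prob (th_pmf N (K N)) {x. \<bar>moment_L L N (K N) x - poisson_moment L \<beta>\<bar> > \<epsilon>}"
      using eventually_gt_at_top[of 0]
      by eventually_elim (rule prob_th_pmf_moment_L_eq[where P = "\<lambda>m. \<bar>m - poisson_moment L \<beta>\<bar> > \<epsilon>", symmetric])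
  qed
qed

end
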